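(* Let $G=G_1\,\square\,\cdots\,\square\, G_d$, where each $G_j$ is a connected $k_j$-regular graph and $k=k_1+\cdots+k_d$ is odd. If the set of Laplacian eigenvalues of $G_j$ consists of even integers for each $j\in\{1,\ldots,d\}$, then for every vertex $u$ of $G$, $\uparrow^{2}G$ has Laplacian perfect state transfer between $(0,u)$ and $(1,u)$ at time $\frac{\pi}{2}$.
   Context: All graphs are simple, undirected, unweighted and connected. The Cartesian product $G\,\square\, H$ of graphs on $m$ and $n$ vertices is the graph with Laplacian matrix $L(G)\otimes I_n+I_m\otimes L(H)$, where $L=D-A$ is the Laplacian. The blow-up $\uparrow^{2}G$ has vertex set $\mathbb{Z}_2\times V(G)$, with $(l,u)\sim(m,v)$ iff $u\sim v$ in $G$. For a graph $X$ with Laplacian $L$, $U(t)=\exp(itL)$, and $X$ has Laplacian perfect state transfer between vertices $a,b$ at time $\tau$ if $U(\tau)\mathbf{e}_a=\gamma\mathbf{e}_b$ for some $\gamma\in\mathbb{C}$. *)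

theory Defs
  imports Complex_Main
begin

definition simple_graph :: "'a set \<Rightarrow> ('a \<Rightarrow> 'a \<Rightarrow> bool) \<Rightarrow> bool" where
  "simple_graph V E \<longleftrightarrow> finite V \<and> (\<forall>u v. E u v \<longrightarrow> u \<in> V \<and> v \<in> V)
     \<and> (\<forall>u v. E u v \<longrightarrow> E v u) \<and> (\<forall>u. \<not> E u u)"

definition connected_graph :: "'a set \<Rightarrow> ('a \<Rightarrow> 'a \<Rightarrow> bool) \<Rightarrow> bool" where
  "connected_graph V E \<longleftrightarrow> V \<noteq> {} \<and> (\<forall>u\<in>V. \<forall>v\<in>V. E\<^sup>*\<^sup>* u v)"

definition nbrs :: "'a set \<Rightarrow> ('a \<Rightarrow> 'a \<Rightarrow> bool) \<Rightarrow> 'a \<Rightarrow> 'a set" where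
  "nbrs V E u = {v \<in> V. E u v}"

definition regular_graph :: "'a set \<Rightarrow> ('a \<Rightarrow> 'a \<Rightarrow> bool) \<Rightarrow> nat \<Rightarrow> bool" where
  "regular_graph V E k \<longleftrightarrow> (\<forall>u\<in>V. card (nbrs V E u) = k)"

text \<open>Laplacian L = D - A acting on vertex functions (column vectors indexed by V).\<close>
definition laplacian :: "'a set \<Rightarrow> ('a \<Rightarrow> 'a \<Rightarrow> bool) \<Rightarrow> ('a \<Rightarrow> 'b::comm_ring_1) \<Rightarrow> 'a \<Rightarrow> 'b" where
  "laplacian V E f u = of_nat (card (nbrs V E u)) * f u - (\<Sum>v\<in>nbrs V E u. f v)"

text \<open>Laplacian eigenvalues (the Laplacian is real symmetric, so all eigenvalues are real).\<close>
definition lap_eigenvalue :: "'a set \<Rightarrow> ('a \<Rightarrow> 'a \<Rightarrow> bool) \<Rightarrow> real \<Rightarrow> bool" where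
  "lap_eigenvalue V E mu \<longleftrightarrow>
     (\<exists>f :: 'a \<Rightarrow> real. (\<exists>u\<in>V. f u \<noteq> 0) \<and> (\<forall>u\<in>V. laplacian V E f u = mu * f u))"

text \<open>(U(t) e_a)(b) where U(t) = exp(i t L) = sum_n (i t L)^n / n!.\<close>
definition transition :: "'a set \<Rightarrow> ('a \<Rightarrow> 'a \<Rightarrow> bool) \<Rightarrow> real \<Rightarrow> 'a \<Rightarrow> 'a \<Rightarrow> complex" where
  "transition V E t a b =
     (\<Sum>n. ((\<i> * complex_of_real t) ^ n / of_nat (fact n))
            * ((laplacian V E ^^ n) (\<lambda>x. if x = a then 1 else 0)) b)"

definition lap_pst :: "'a set \<Rightarrow> ('a \<Rightarrow> 'a \<Rightarrow> bool) \<Rightarrow> 'a \<Rightarrow> 'a \<Rightarrow> real \<Rightarrow> bool" where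
  "lap_pst V E a b \<tau> \<longleftrightarrow>
     (\<exists>\<gamma>::complex. \<forall>x\<in>V. transition V E \<tau> a x = (if x = b then \<gamma> else 0))"

text \<open>Cartesian product G_0 [] ... [] G_(d-1); vertices are lists of length d.\<close>
definition cart_V :: "nat \<Rightarrow> (nat \<Rightarrow> 'a set) \<Rightarrow> 'a list set" where
  "cart_V d Vs = {xs. length xs = d \<and> (\<forall>j<d. xs ! j \<in> Vs j)}"

definition cart_E :: "nat \<Rightarrow> (nat \<Rightarrow> 'a set) \<Rightarrow> (nat \<Rightarrow> 'a \<Rightarrow> 'a \<Rightarrow> bool) \<Rightarrow> 'a list \<Rightarrow> 'a list \<Rightarrow> bool" where
  "cart_E d Vs Es xs ys \<longleftrightarrow> xs \<in> cart_V d Vs \<and> ys \<in> cart_V d Vs \<and>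
     (\<exists>j<d. Es j (xs ! j) (ys ! j) \<and> (\<forall>i<d. i \<noteq> j \<longrightarrow> xs ! i = ys ! i))"

text \<open>Blow-up: Z_2 is represented by bool (False = 0, True = 1).\<close>
definition blowup_V :: "'a set \<Rightarrow> (bool \<times> 'a) set" where
  "blowup_V V = UNIV \<times> V"

definition blowup_E :: "('a \<Rightarrow> 'a \<Rightarrow> bool) \<Rightarrow> bool \<times> 'a \<Rightarrow> bool \<times> 'a \<Rightarrow> bool" where
  "blowup_E E x y \<longleftrightarrow> E (snd x) (snd y)"

end

theory Submission
  imports Defs "HOL-Library.FuncSet" "HOL-Computational_Algebra.Fundamental_Theorem_Algebra"
begin

text \<open>
  In the blow-up of G every vertex x is doubled to (0, x) and (1, x). On functions that do not
  depend on the Z_2 coordinate the Laplacian acts as 2 L(G), while e_(0,u) - e_(1,u) is an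
  eigenvector for 2 deg u = 2 k. Hence
  e_(0,u) = (e_(0,u) - e_(1,u)) / 2 + (e_u lifted) / 2, and at time pi/2 the first part picks up
  the phase exp (i pi k) = -1 because k is odd, while the second evolves under exp (i pi L(G)).
  Expanding e_u into eigenvectors of L(G) that are products of eigenvectors of the factors, all
  eigenvalues involved are sums of even integers, so exp (i pi L(G)) fixes e_u and
  U(pi/2) e_(0,u) = e_(1,u).

  Such eigenvector expansions exist because L is self-adjoint: f, L f, ..., L^|V| f are
  linearly dependent, the resulting annihilating polynomial splits over the complex numbers, and
  self-adjointness excludes generalised eigenvectors.
\<close>

section \<open>The Laplacian as a self-adjoint operator\<close>

lemma laplacian_cong:
  assumes "\<forall>y\<in>V. f y = g y" "x \<in> V"
  shows "laplacian V E f x = laplacian V E g x"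
  using assms by (simp add: laplacian_def nbrs_def)

lemma laplacian_linear:
  "laplacian V E (\<lambda>y. a * f y + b * g y) x = a * laplacian V E f x + b * laplacian V E g x"
  by (simp add: laplacian_def sum.distrib sum_distrib_left algebra_simps)

lemma laplacian_cmult: "laplacian V E (\<lambda>y. a * f y) x = a * laplacian V E f x"
  using laplacian_linear[of V E a f 0 f] by simp

lemma laplacian_diff: "laplacian V E (\<lambda>y. f y - g y) x = laplacian V E f x - laplacian V E g x"
  using laplacian_linear[of V E 1 f "-1" g] by simp

lemma laplacian_sum:
  "laplacian V E (\<lambda>y. \<Sum>i\<in>I. F i y) x = (\<Sum>i\<in>I. laplacian V E (F i) x)"
  by (simp add: laplacian_def sum_distrib_left sum_subtractf sum.swap[of _ I])

lemma laplacian_cnj: "laplacian V E (\<lambda>y. cnj (f y)) x = cnj (laplacian V E f x)"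
  by (simp add: laplacian_def)

lemma laplacian_Re: "laplacian V E (\<lambda>y. Re (f y)) x = Re (laplacian V E f x)"
  by (simp add: laplacian_def Re_sum)

lemma laplacian_Im: "laplacian V E (\<lambda>y. Im (f y)) x = Im (laplacian V E f x)"
  by (simp add: laplacian_def Im_sum)

lemma laplacian_pow_linear:
  "(laplacian V E ^^ n) (\<lambda>y. a * f y + b * g y) x
     = a * (laplacian V E ^^ n) f x + b * (laplacian V E ^^ n) g x"
proof (induction n arbitrary: x)
  case (Suc n)
  then have "(laplacian V E ^^ n) (\<lambda>y. a * f y + b * g y)
      = (\<lambda>x. a * (laplacian V E ^^ n) f x + b * (laplacian V E ^^ n) g x)"
    by auto
  then show ?case by (simp add: laplacian_linear)
qed simp

lemma laplacian_pow_sum: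
  "(laplacian V E ^^ n) (\<lambda>y. \<Sum>i\<in>I. F i y) x = (\<Sum>i\<in>I. (laplacian V E ^^ n) (F i) x)"
proof (induction n arbitrary: x)
  case (Suc n)
  then have "(laplacian V E ^^ n) (\<lambda>y. \<Sum>i\<in>I. F i y) = (\<lambda>x. \<Sum>i\<in>I. (laplacian V E ^^ n) (F i) x)"
    by auto
  then show ?case by (simp add: laplacian_sum)
qed simp

lemma laplacian_pow_cong:
  assumes "\<forall>y\<in>V. f y = g y" "x \<in> V"
  shows "(laplacian V E ^^ n) f x = (laplacian V E ^^ n) g x"
  using assms(2)
proof (induction n arbitrary: x)
  case 0
  then show ?case using assms(1) by simp
next
  case (Suc n)
  then show ?case by (simp add: laplacian_cong[of V])
qed

lemma laplacian_symmetric: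
  assumes "simple_graph V E"
  shows "(\<Sum>x\<in>V. laplacian V E f x * g x) = (\<Sum>x\<in>V. f x * laplacian V E g x)"
proof -
  have fin: "finite V" and sym: "\<And>x y. E x y \<Longrightarrow> E y x"
    using assms by (auto simp: simple_graph_def)
  have nbrs_sum: "(\<Sum>y\<in>nbrs V E x. h y) = (\<Sum>y\<in>V. if E x y then h y else 0)" for h :: "_ \<Rightarrow> 'b" and x
    unfolding nbrs_def using fin by (simp add: sum.inter_filter)
  have "(\<Sum>x\<in>V. (\<Sum>y\<in>nbrs V E x. f y) * g x) = (\<Sum>x\<in>V. \<Sum>y\<in>V. if E x y then f y * g x else 0)"
    unfolding nbrs_sum sum_distrib_right by (intro sum.cong refl) simp
  also have "\<dots> = (\<Sum>y\<in>V. \<Sum>x\<in>V. if E x y then f y * g x else 0)"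
    by (rule sum.swap)
  also have "\<dots> = (\<Sum>y\<in>V. \<Sum>x\<in>V. if E y x then f y * g x else 0)"
    by (intro sum.cong refl) (metis sym)
  also have "\<dots> = (\<Sum>y\<in>V. f y * (\<Sum>x\<in>nbrs V E y. g x))"
    unfolding nbrs_sum sum_distrib_left by (intro sum.cong refl) simp
  finally show ?thesis
    unfolding laplacian_def by (simp add: left_diff_distrib right_diff_distrib sum_subtractf algebra_simps)
qed

definition lap_eigvec :: "'a set \<Rightarrow> ('a \<Rightarrow> 'a \<Rightarrow> bool) \<Rightarrow> ('a \<Rightarrow> complex) \<Rightarrow> complex \<Rightarrow> bool" where
  "lap_eigvec V E g mu \<longleftrightarrow> (\<forall>x\<in>V. laplacian V E g x = mu * g x)"

lemma lap_eigvec_cmult: "lap_eigvec V E g mu \<Longrightarrow> lap_eigvec V E (\<lambda>x. a * g x) mu"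
  by (simp add: lap_eigvec_def laplacian_cmult)

lemma lap_eigvec_pow:
  assumes "lap_eigvec V E g mu" "x \<in> V"
  shows "(laplacian V E ^^ n) g x = mu ^ n * g x"
  using assms(2)
proof (induction n arbitrary: x)
  case (Suc n)
  have "(laplacian V E ^^ Suc n) g x = laplacian V E (\<lambda>y. mu ^ n * g y) x"
    using Suc by (simp add: laplacian_cong[of V])
  also have "\<dots> = mu ^ Suc n * g x"
    using assms(1) Suc.prems by (simp add: laplacian_cmult lap_eigvec_def)
  finally show ?case .
qed simp

lemma sum_mult_cnj_eq_0_iff:
  assumes "finite V"
  shows "(\<Sum>x\<in>V. h x * cnj (h x)) = 0 \<longleftrightarrow> (\<forall>x\<in>V. h x = 0)"
proof -
  have "(\<Sum>x\<in>V. h x * cnj (h x)) = of_real (\<Sum>x\<in>V. (cmod (h x))\<^sup>2)"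
    unfolding complex_norm_square[symmetric] of_real_sum ..
  then show ?thesis
    using assms by (simp only: of_real_eq_0_iff sum_nonneg_eq_0_iff zero_le_power2) simp
qed

lemma lap_eigvec_eigenvalue_real:
  assumes "simple_graph V E" "lap_eigvec V E g mu" "\<exists>x\<in>V. g x \<noteq> 0"
  shows "cnj mu = mu"
proof -
  have fin: "finite V" using assms(1) by (simp add: simple_graph_def)
  have "(\<Sum>x\<in>V. laplacian V E g x * cnj (g x)) = (\<Sum>x\<in>V. g x * laplacian V E (\<lambda>y. cnj (g y)) x)"
    by (rule laplacian_symmetric[OF assms(1)])
  then have "(\<Sum>x\<in>V. mu * g x * cnj (g x)) = (\<Sum>x\<in>V. g x * cnj (mu * g x))"
    using assms(2) by (simp add: lap_eigvec_def laplacian_cnj)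
  then have "(mu - cnj mu) * (\<Sum>x\<in>V. g x * cnj (g x)) = 0"
    by (simp add: algebra_simps sum_subtractf sum_distrib_left)
  moreover have "(\<Sum>x\<in>V. g x * cnj (g x)) \<noteq> 0"
    using assms(3) sum_mult_cnj_eq_0_iff[OF fin] by blast
  ultimately show ?thesis by simp
qed

definition lap_shift :: "'a set \<Rightarrow> ('a \<Rightarrow> 'a \<Rightarrow> bool) \<Rightarrow> complex \<Rightarrow> ('a \<Rightarrow> complex) \<Rightarrow> 'a \<Rightarrow> complex" where
  "lap_shift V E r f y = laplacian V E f y - r * f y"

lemma lap_eigvec_not_in_range:
  assumes sg: "simple_graph V E" and G: "lap_eigvec V E G r"
    and range: "\<forall>x\<in>V. lap_shift V E r f x = G x"
  shows "\<forall>x\<in>V. G x = 0"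
proof (rule ccontr)
  assume "\<not> (\<forall>x\<in>V. G x = 0)"
  then have r: "cnj r = r" using lap_eigvec_eigenvalue_real[OF sg G] by blast
  have fin: "finite V" using sg by (simp add: simple_graph_def)
  have "(\<Sum>x\<in>V. G x * cnj (G x))
      = (\<Sum>x\<in>V. laplacian V E f x * cnj (G x) - r * (f x * cnj (G x)))"
    using range by (intro sum.cong refl) (auto simp: lap_shift_def algebra_simps)
  also have "\<dots> = (\<Sum>x\<in>V. laplacian V E f x * cnj (G x)) - r * (\<Sum>x\<in>V. f x * cnj (G x))"
    by (simp add: sum_subtractf sum_distrib_left)
  also have "(\<Sum>x\<in>V. laplacian V E f x * cnj (G x)) = (\<Sum>x\<in>V. f x * cnj (laplacian V E G x))"
    by (simp add: laplacian_symmetric[OF sg] laplacian_cnj)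
  also have "\<dots> = r * (\<Sum>x\<in>V. f x * cnj (G x))"
    using G r by (simp add: lap_eigvec_def sum_distrib_left algebra_simps)
  finally have "\<forall>x\<in>V. G x = 0" using sum_mult_cnj_eq_0_iff[OF fin] by simp
  with \<open>\<not> (\<forall>x\<in>V. G x = 0)\<close> show False ..
qed

section \<open>Eigenvector expansions\<close>

definition lap_expansion ::
    "'a set \<Rightarrow> ('a \<Rightarrow> 'a \<Rightarrow> bool) \<Rightarrow> ('a \<Rightarrow> complex) \<Rightarrow> 'i set \<Rightarrow> ('i \<Rightarrow> 'a \<Rightarrow> complex) \<Rightarrow> ('i \<Rightarrow> complex) \<Rightarrow> bool" where
  "lap_expansion V E f I F mu \<longleftrightarrow>
     finite I \<and> (\<forall>i\<in>I. lap_eigvec V E (F i) (mu i)) \<and> (\<forall>x\<in>V. f x = (\<Sum>i\<in>I. F i x))"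

lemma exp_series_lap_eigvec:
  assumes "lap_eigvec V E g mu" "x \<in> V"
  shows "(\<lambda>n. ((\<i> * complex_of_real t) ^ n / of_nat (fact n)) * (laplacian V E ^^ n) g x)
           sums (exp (\<i> * complex_of_real t * mu) * g x)"
proof -
  have "(\<lambda>n. (\<i> * complex_of_real t * mu) ^ n /\<^sub>R fact n * g x) sums (exp (\<i> * complex_of_real t * mu) * g x)"
    by (intro sums_mult2 exp_converges)
  moreover have "(\<i> * complex_of_real t * mu) ^ n /\<^sub>R fact n * g x
      = ((\<i> * complex_of_real t) ^ n / of_nat (fact n)) * (laplacian V E ^^ n) g x" for n
    using lap_eigvec_pow[OF assms] by (simp add: scaleR_conv_of_real power_mult_distrib field_simps)
  ultimately show ?thesis by simp
qed

lemma transition_lap_expansion: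
  assumes "lap_expansion V E (\<lambda>x. if x = a then 1 else 0) I F mu" "x \<in> V"
  shows "transition V E t a x = (\<Sum>i\<in>I. exp (\<i> * complex_of_real t * mu i) * F i x)"
proof -
  have fin: "finite I" and eig: "\<forall>i\<in>I. lap_eigvec V E (F i) (mu i)"
    and dec: "\<forall>y\<in>V. (if y = a then 1 else 0) = (\<Sum>i\<in>I. F i y)"
    using assms(1) by (auto simp: lap_expansion_def)
  have "(\<lambda>n. \<Sum>i\<in>I. ((\<i> * complex_of_real t) ^ n / of_nat (fact n)) * (laplacian V E ^^ n) (F i) x)
      sums (\<Sum>i\<in>I. exp (\<i> * complex_of_real t * mu i) * F i x)"
    using eig assms(2) by (intro sums_sum exp_series_lap_eigvec) auto
  moreover have "(\<Sum>i\<in>I. ((\<i> * complex_of_real t) ^ n / of_nat (fact n)) * (laplacian V E ^^ n) (F i) x)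
      = ((\<i> * complex_of_real t) ^ n / of_nat (fact n)) * (laplacian V E ^^ n) (\<lambda>y. if y = a then 1 else 0) x"
    for n
    by (subst laplacian_pow_cong[OF dec assms(2)]) (simp add: laplacian_pow_sum sum_distrib_left)
  ultimately show ?thesis unfolding transition_def by (simp add: sums_iff)
qed

text \<open>
  Each F i with mu i \<noteq> r equals (L - r) (F i / (mu i - r)). Subtracting these from f leaves f'
  with (L - r) f' = G, where G, the sum of the F i with mu i = r, lies in the kernel of L - r;
  self-adjointness forces G = 0. Since inverse 0 = 0, c i vanishes exactly for these i.
\<close>

lemma lap_expansion_shift:
  assumes sg: "simple_graph V E" and h: "lap_expansion V E (lap_shift V E r f) {..<n} F mu"
  shows "\<exists>F' mu'. lap_expansion V E f {..<Suc n} F' mu'"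
proof -
  define c where "c i = inverse (mu i - r)" for i
  define f' where "f' = (\<lambda>y. f y - (\<Sum>i<n. c i * F i y))"
  define G where "G y = (\<Sum>i\<in>{i. i < n \<and> mu i = r}. F i y)" for y
  have eig: "\<forall>i<n. lap_eigvec V E (F i) (mu i)"
    and dec: "\<forall>x\<in>V. lap_shift V E r f x = (\<Sum>i<n. F i x)"
    using h by (auto simp: lap_expansion_def)
  have G_eig: "lap_eigvec V E G r"
    using eig unfolding G_def by (auto simp: lap_eigvec_def laplacian_sum sum_distrib_left)
  have shift_f': "lap_shift V E r f' x = G x" if x: "x \<in> V" for x
  proof -
    have "laplacian V E f' x = laplacian V E f x - (\<Sum>i<n. c i * (mu i * F i x))"
      using eig x by (simp add: f'_def laplacian_diff laplacian_sum laplacian_cmult lap_eigvec_def)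
    then have "lap_shift V E r f' x = lap_shift V E r f x - (\<Sum>i<n. c i * (mu i - r) * F i x)"
      by (simp add: lap_shift_def f'_def sum_subtractf sum_distrib_left algebra_simps)
    also have "(\<Sum>i<n. c i * (mu i - r) * F i x) = (\<Sum>i\<in>{i. i < n \<and> mu i \<noteq> r}. F i x)"
      by (rule sum.mono_neutral_cong_right) (auto simp: c_def)
    moreover have "(\<Sum>i<n. F i x) = (\<Sum>i\<in>{i. i < n \<and> mu i \<noteq> r}. F i x) + G x"
      unfolding G_def by (subst sum.union_disjoint[symmetric]) (auto intro!: sum.cong)
    ultimately show ?thesis
      using dec x by simp
  qed
  then have "\<forall>x\<in>V. G x = 0"
    by (intro lap_eigvec_not_in_range[OF sg G_eig, of f']) simp
  then have "lap_eigvec V E f' r"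
    using shift_f' by (simp add: lap_eigvec_def lap_shift_def)
  then have "lap_expansion V E f {..<Suc n} (case_nat f' (\<lambda>i y. c i * F i y)) (case_nat r mu)"
    using eig unfolding lap_expansion_def sum.lessThan_Suc_shift
    by (auto simp: less_Suc_eq_0_disj lap_eigvec_cmult f'_def)
  then show ?thesis by blast
qed

lemma lap_expansion_of_annihilated:
  assumes sg: "simple_graph V E"
  shows "\<forall>x\<in>V. fold (lap_shift V E) rs f x = 0 \<Longrightarrow> \<exists>(n::nat) F mu. lap_expansion V E f {..<n} F mu"
proof (induction rs arbitrary: f)
  case Nil
  then have "lap_expansion V E f {..<0::nat} (\<lambda>_. f) (\<lambda>_. 0)"
    by (auto simp: lap_expansion_def)
  then show ?case by blast
next
  case (Cons r rs)
  then have "\<exists>(n::nat) F mu. lap_expansion V E (lap_shift V E r f) {..<n} F mu"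
    by simp
  then show ?case using lap_expansion_shift[OF sg] by blast
qed

lemma card_lt_imp_linear_dependence:
  fixes g :: "'i \<Rightarrow> 'a \<Rightarrow> 'b::field"
  assumes "finite V"
  shows "finite I \<Longrightarrow> card V < card I \<Longrightarrow>
    \<exists>c. (\<exists>i\<in>I. c i \<noteq> 0) \<and> (\<forall>x\<in>V. (\<Sum>i\<in>I. c i * g i x) = 0)"
  using assms
proof (induction V arbitrary: I g rule: finite_induct)
  case empty
  then obtain i where "i \<in> I" by fastforce
  then show ?case by (intro exI[of _ "\<lambda>j. if j = i then 1 else 0"]) auto
next
  case (insert a V)
  show ?case
  proof (cases "\<forall>i\<in>I. g i a = 0")
    case True
    have "card V < card I" using insert by simp
    with insert.IH[OF insert.prems(1)] obtain c where
      "\<exists>i\<in>I. c i \<noteq> 0" "\<forall>x\<in>V. (\<Sum>i\<in>I. c i * g i x) = 0" by blast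
    then show ?thesis using True by (intro exI[of _ c]) auto
  next
    case False
    then obtain j where j: "j \<in> I" "g j a \<noteq> 0" by blast
    define h where "h i x = g i x - (g i a / g j a) * g j x" for i x
    have "card V < card (I - {j})" using insert j by simp
    with insert.IH[of "I - {j}"] insert.prems(1) obtain c where
      c: "\<exists>i\<in>I - {j}. c i \<noteq> 0" "\<forall>x\<in>V. (\<Sum>i\<in>I - {j}. c i * h i x) = 0" by blast
    define c' where "c' i = (if i = j then - (\<Sum>l\<in>I - {j}. c l * g l a) / g j a else c i)" for i
    have comb: "(\<Sum>i\<in>I. c' i * g i x) = (\<Sum>i\<in>I - {j}. c i * h i x)" for x
    proof -
      have "(\<Sum>i\<in>I. c' i * g i x) = c' j * g j x + (\<Sum>i\<in>I - {j}. c i * g i x)"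
        using j insert.prems(1) by (simp add: sum.remove c'_def)
      then show ?thesis
        by (simp add: h_def c'_def algebra_simps sum_subtractf sum_distrib_left sum_distrib_right
            sum_divide_distrib)
    qed
    have "h i a = 0" for i using j by (simp add: h_def)
    then have "\<forall>x\<in>insert a V. (\<Sum>i\<in>I. c' i * g i x) = 0"
      using c comb by auto
    moreover have "\<exists>i\<in>I. c' i \<noteq> 0" using c by (auto simp: c'_def)
    ultimately show ?thesis by blast
  qed
qed

definition lap_poly :: "'a set \<Rightarrow> ('a \<Rightarrow> 'a \<Rightarrow> bool) \<Rightarrow> complex poly \<Rightarrow> ('a \<Rightarrow> complex) \<Rightarrow> 'a \<Rightarrow> complex" where
  "lap_poly V E p f x = (\<Sum>k\<le>degree p. coeff p k * (laplacian V E ^^ k) f x)"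

lemma lap_poly_eq_sum_le:
  assumes "degree p \<le> N"
  shows "lap_poly V E p f x = (\<Sum>k\<le>N. coeff p k * (laplacian V E ^^ k) f x)"
  unfolding lap_poly_def using assms
  by (intro sum.mono_neutral_left) (auto simp: coeff_eq_0)

lemma lap_poly_smult: "lap_poly V E (smult a p) f x = a * lap_poly V E p f x"
  by (cases "a = 0") (simp_all add: lap_poly_def sum_distrib_left algebra_simps)

lemma lap_poly_mult_linear_factor:
  "lap_poly V E (p * [:-r, 1:]) f x = lap_poly V E p (lap_shift V E r f) x"
proof -
  define D where "D = degree p"
  let ?L = "laplacian V E"
  have split: "p * [:-r, 1:] = smult (-r) p + pCons 0 p" by simp
  have "degree (p * [:-r, 1:]) \<le> Suc D"
    unfolding split D_def by (meson degree_add_le degree_pCons_le degree_smult_le le_SucI)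
  then have "lap_poly V E (p * [:-r, 1:]) f x
      = (-r) * (\<Sum>k\<le>Suc D. coeff p k * (?L ^^ k) f x)
        + (\<Sum>k\<le>Suc D. coeff (pCons 0 p) k * (?L ^^ k) f x)"
    by (simp only: lap_poly_eq_sum_le split coeff_add coeff_smult distrib_right sum.distrib
        sum_distrib_left mult.assoc)
  also have "(\<Sum>k\<le>Suc D. coeff p k * (?L ^^ k) f x) = (\<Sum>k\<le>D. coeff p k * (?L ^^ k) f x)"
    by (simp add: D_def coeff_eq_0)
  also have "(\<Sum>k\<le>Suc D. coeff (pCons 0 p) k * (?L ^^ k) f x)
      = (\<Sum>k\<le>D. coeff p k * (?L ^^ k) (?L f) x)"
    by (subst sum.atMost_Suc_shift) (simp del: funpow.simps add: funpow_Suc_right)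
  also have "(-r) * (\<Sum>k\<le>D. coeff p k * (?L ^^ k) f x) + \<dots>
      = (\<Sum>k\<le>D. coeff p k * ((?L ^^ k) (?L f) x - r * (?L ^^ k) f x))"
    by (simp add: algebra_simps sum_subtractf sum_distrib_left sum_negf)
  also have "\<dots> = (\<Sum>k\<le>D. coeff p k * (?L ^^ k) (lap_shift V E r f) x)"
    using laplacian_pow_linear[where V = V and E = E and a = 1 and f = "?L f" and b = "-r" and g = f]
    by (simp add: lap_shift_def[abs_def])
  finally show ?thesis by (simp add: lap_poly_def D_def)
qed

lemma lap_poly_linear_factors:
  "lap_poly V E (\<Prod>r\<leftarrow>rs. [:-r, 1:]) f x = fold (lap_shift V E) rs f x"
proof (induction rs arbitrary: f)
  case Nil
  then show ?case by (simp add: lap_poly_def)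
next
  case (Cons r rs)
  have "(\<Prod>r\<leftarrow>r # rs. [:-r, 1:]) = (\<Prod>r\<leftarrow>rs. [:-r, 1:]) * [:-r, 1:]" by simp
  then show ?case by (simp only: lap_poly_mult_linear_factor Cons fold_simps)
qed

theorem lap_expansion_exists:
  assumes sg: "simple_graph V E"
  shows "\<exists>(n::nat) F mu. lap_expansion V E f {..<n} F mu"
proof -
  have fin: "finite V" using sg by (simp add: simple_graph_def)
  define N where "N = card V"
  obtain c where c: "\<exists>k\<in>{..N}. c k \<noteq> 0" "\<forall>x\<in>V. (\<Sum>k\<le>N. c k * (laplacian V E ^^ k) f x) = 0"
    using card_lt_imp_linear_dependence[OF fin, of "{..N}" "\<lambda>k. (laplacian V E ^^ k) f"]
    by (auto simp: N_def)
  define p where "p = (\<Sum>k\<le>N. monom (c k) k)"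
  have coeff_p: "coeff p k = (if k \<le> N then c k else 0)" for k
    by (simp add: p_def coeff_sum)
  have "degree p \<le> N" by (rule degree_le) (simp add: coeff_p)
  then have "\<forall>x\<in>V. lap_poly V E p f x = 0"
    using c(2) by (simp add: lap_poly_eq_sum_le coeff_p)
  moreover obtain rs where rs: "mset rs = proots p" using ex_mset by blast
  have "(\<Prod>r\<leftarrow>rs. [:-r, 1:]) = (\<Prod>r\<in>#proots p. [:-r, 1:])"
    by (simp flip: rs prod_mset_prod_list)
  then have p_eq: "p = smult (lead_coeff p) (\<Prod>r\<leftarrow>rs. [:-r, 1:])"
    using complex_poly_decompose_multiset[of p] by simp
  have "lap_poly V E p f x = lead_coeff p * fold (lap_shift V E) rs f x" for x
    using arg_cong[OF p_eq, of "\<lambda>q. lap_poly V E q f x"]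
    by (simp add: lap_poly_smult lap_poly_linear_factors)
  moreover have "lead_coeff p \<noteq> 0"
    using c(1) coeff_p by (metis atMost_iff coeff_0 leading_coeff_0_iff)
  ultimately have "\<forall>x\<in>V. fold (lap_shift V E) rs f x = 0"
    by simp
  then show ?thesis by (rule lap_expansion_of_annihilated[OF sg])
qed

lemma lap_eigenvalue_Re:
  assumes "simple_graph V E" "lap_eigvec V E g mu" "\<exists>x\<in>V. g x \<noteq> 0"
  shows "lap_eigenvalue V E (Re mu)"
proof -
  have "Im mu = 0"
    using arg_cong[OF lap_eigvec_eigenvalue_real[OF assms], of Im] by simp
  then have Re: "\<forall>x\<in>V. laplacian V E (\<lambda>y. Re (g y)) x = Re mu * Re (g x)"
    and Im: "\<forall>x\<in>V. laplacian V E (\<lambda>y. Im (g y)) x = Re mu * Im (g x)"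
    using assms(2) by (simp_all add: lap_eigvec_def laplacian_Re laplacian_Im)
  from assms(3) obtain x where x: "x \<in> V" "Re (g x) \<noteq> 0 \<or> Im (g x) \<noteq> 0"
    by (auto simp: complex_eq_iff)
  from x(2) show ?thesis
  proof
    assume "Re (g x) \<noteq> 0"
    then show ?thesis unfolding lap_eigenvalue_def using Re x(1)
      by (intro exI[of _ "\<lambda>y. Re (g y)"] conjI bexI[of _ x]) auto
  next
    assume "Im (g x) \<noteq> 0"
    then show ?thesis unfolding lap_eigenvalue_def using Im x(1)
      by (intro exI[of _ "\<lambda>y. Im (g y)"] conjI bexI[of _ x]) auto
  qed
qed

lemma lap_eigvec_even:
  assumes sg: "simple_graph V E" and eig: "lap_eigvec V E g mu"
    and even: "\<forall>mu. lap_eigenvalue V E mu \<longrightarrow> (\<exists>m::int. mu = 2 * of_int m)"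
  shows "\<exists>m::int. lap_eigvec V E g (2 * of_int m)"
proof (cases "\<exists>x\<in>V. g x \<noteq> 0")
  case True
  then obtain m :: int where m: "Re mu = 2 * of_int m"
    using even lap_eigenvalue_Re[OF sg eig] by blast
  have "cnj mu = mu" by (rule lap_eigvec_eigenvalue_real[OF sg eig True])
  then have "mu = 2 * of_int m" using m by (simp add: complex_eq_iff)
  then show ?thesis using eig by blast
next
  case False
  then have "lap_eigvec V E g 0"
    by (auto simp: lap_eigvec_def laplacian_def nbrs_def)
  then show ?thesis by (intro exI[of _ 0]) simp
qed

lemma lap_expansion_even:
  assumes sg: "simple_graph V E"
    and even: "\<forall>mu. lap_eigenvalue V E mu \<longrightarrow> (\<exists>m::int. mu = 2 * of_int m)"
  shows "\<exists>(n::nat) F (M::nat \<Rightarrow> int). lap_expansion V E f {..<n} F (\<lambda>i. 2 * of_int (M i))"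
proof -
  obtain n :: nat and F mu where exp: "lap_expansion V E f {..<n} F mu"
    using lap_expansion_exists[OF sg] by blast
  then have "\<forall>i\<in>{..<n}. lap_eigvec V E (F i) (mu i)"
    by (simp add: lap_expansion_def)
  then have "\<forall>i\<in>{..<n}. \<exists>m::int. lap_eigvec V E (F i) (2 * of_int m)"
    using lap_eigvec_even[OF sg _ even] by blast
  from bchoice[OF this] obtain M where "\<forall>i\<in>{..<n}. lap_eigvec V E (F i) (2 * of_int (M i))"
    by blast
  with exp have "lap_expansion V E f {..<n} F (\<lambda>i. 2 * of_int (M i))"
    by (simp add: lap_expansion_def)
  then show ?thesis by blast
qed

section \<open>Cartesian products\<close>

lemma nbrs_cart:
  assumes "x \<in> cart_V d Vs"
  shows "nbrs (cart_V d Vs) (cart_E d Vs Es) x = (\<Union>j<d. (\<lambda>y. x[j := y]) ` nbrs (Vs j) (Es j) (x ! j))"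
proof (intro equalityI subsetI)
  fix z assume "z \<in> nbrs (cart_V d Vs) (cart_E d Vs Es) x"
  then have z: "z \<in> cart_V d Vs" and "cart_E d Vs Es x z" by (auto simp: nbrs_def)
  then obtain j where j: "j < d" "Es j (x ! j) (z ! j)" "\<forall>i<d. i \<noteq> j \<longrightarrow> x ! i = z ! i"
    by (auto simp: cart_E_def)
  have "z = x[j := z ! j]"
    using assms z j by (intro nth_equalityI) (auto simp: cart_V_def nth_list_update)
  moreover have "z ! j \<in> nbrs (Vs j) (Es j) (x ! j)" using z j by (auto simp: nbrs_def cart_V_def)
  ultimately show "z \<in> (\<Union>j<d. (\<lambda>y. x[j := y]) ` nbrs (Vs j) (Es j) (x ! j))" using j by blast
next
  fix z assume "z \<in> (\<Union>j<d. (\<lambda>y. x[j := y]) ` nbrs (Vs j) (Es j) (x ! j))"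
  then obtain j y where j: "j < d" "y \<in> Vs j" "Es j (x ! j) y" "z = x[j := y]"
    by (auto simp: nbrs_def)
  have "length x = d" using assms by (simp add: cart_V_def)
  then have "z \<in> cart_V d Vs" and "cart_E d Vs Es x z"
    using assms j by (auto simp: cart_V_def cart_E_def nth_list_update)
  then show "z \<in> nbrs (cart_V d Vs) (cart_E d Vs Es) x" by (simp add: nbrs_def)
qed

lemma sum_nbrs_cart:
  assumes sg: "\<forall>j<d. simple_graph (Vs j) (Es j)" and x: "x \<in> cart_V d Vs"
  shows "(\<Sum>z\<in>nbrs (cart_V d Vs) (cart_E d Vs Es) x. h z)
       = (\<Sum>j<d. \<Sum>y\<in>nbrs (Vs j) (Es j) (x ! j). h (x[j := y]))"
proof -
  have lx: "length x = d" using x by (simp add: cart_V_def)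
  have fin: "finite (nbrs (Vs j) (Es j) (x ! j))" and irr: "x ! j \<notin> nbrs (Vs j) (Es j) (x ! j)"
    if "j < d" for j
    using sg that by (auto simp: simple_graph_def nbrs_def)
  have inj: "inj_on (\<lambda>y. x[j := y]) (nbrs (Vs j) (Es j) (x ! j))" if "j < d" for j
    using that lx by (intro inj_onI) (metis nth_list_update_eq)
  have disj: "(\<lambda>y. x[i := y]) ` nbrs (Vs i) (Es i) (x ! i) \<inter> (\<lambda>y. x[j := y]) ` nbrs (Vs j) (Es j) (x ! j) = {}"
    if "i < d" "j < d" "i \<noteq> j" for i j
  proof -
    have "x[i := y] \<noteq> x[j := y']" if "y \<in> nbrs (Vs i) (Es i) (x ! i)" for y y'
      using irr[OF \<open>i < d\<close>] that \<open>i \<noteq> j\<close> \<open>i < d\<close> lx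
      by (metis nth_list_update_eq nth_list_update_neq)
    then show ?thesis by blast
  qed
  show ?thesis
    unfolding nbrs_cart[OF x] using fin inj disj
    by (subst sum.UNION_disjoint) (auto simp: sum.reindex)
qed

lemma card_nbrs_cart:
  assumes "\<forall>j<d. simple_graph (Vs j) (Es j)" "x \<in> cart_V d Vs"
  shows "card (nbrs (cart_V d Vs) (cart_E d Vs Es) x) = (\<Sum>j<d. card (nbrs (Vs j) (Es j) (x ! j)))"
  using sum_nbrs_cart[OF assms, of "\<lambda>_. 1::nat"] by simp

lemma lap_eigvec_cart:
  assumes sg: "\<forall>j<d. simple_graph (Vs j) (Es j)"
    and eig: "\<forall>j<d. lap_eigvec (Vs j) (Es j) (g j) (mu j)"
  shows "lap_eigvec (cart_V d Vs) (cart_E d Vs Es) (\<lambda>x. \<Prod>j<d. g j (x ! j)) (\<Sum>j<d. mu j)"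
  unfolding lap_eigvec_def
proof
  fix x assume x: "x \<in> cart_V d Vs"
  have lx: "length x = d" and xj: "\<forall>j<d. x ! j \<in> Vs j" using x by (auto simp: cart_V_def)
  define Q where "Q j = (\<Prod>i\<in>{..<d} - {j}. g i (x ! i))" for j
  have update: "(\<Prod>i<d. g i (x[j := y] ! i)) = g j y * Q j" if "j < d" for j y
  proof -
    have "(\<Prod>i\<in>{..<d} - {j}. g i (x[j := y] ! i)) = Q j"
      unfolding Q_def by (intro prod.cong) auto
    then show ?thesis using that lx by (simp add: prod.remove)
  qed
  have self: "(\<Prod>i<d. g i (x ! i)) = g j (x ! j) * Q j" if "j < d" for j
    using update[OF that, of "x ! j"] by simp
  have "laplacian (cart_V d Vs) (cart_E d Vs Es) (\<lambda>x. \<Prod>j<d. g j (x ! j)) x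
      = (\<Sum>j<d. of_nat (card (nbrs (Vs j) (Es j) (x ! j))) * (\<Prod>i<d. g i (x ! i))
                - (\<Sum>y\<in>nbrs (Vs j) (Es j) (x ! j). \<Prod>i<d. g i (x[j := y] ! i)))"
    unfolding laplacian_def card_nbrs_cart[OF sg x] sum_nbrs_cart[OF sg x]
    by (simp add: sum_subtractf sum_distrib_right)
  also have "\<dots> = (\<Sum>j<d. Q j * laplacian (Vs j) (Es j) (g j) (x ! j))"
    by (intro sum.cong refl)
      (simp add: self update laplacian_def sum_distrib_left sum_distrib_right algebra_simps)
  also have "\<dots> = (\<Sum>j<d. mu j * (\<Prod>i<d. g i (x ! i)))"
    using eig xj by (intro sum.cong refl) (auto simp: lap_eigvec_def self)
  finally show "laplacian (cart_V d Vs) (cart_E d Vs Es) (\<lambda>x. \<Prod>j<d. g j (x ! j)) x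
      = (\<Sum>j<d. mu j) * (\<Prod>j<d. g j (x ! j))"
    by (simp add: sum_distrib_right)
qed

lemma indicator_cart:
  assumes "x \<in> cart_V d Vs" "u \<in> cart_V d Vs"
  shows "(if x = u then 1 else 0) = (\<Prod>j<d. if x ! j = u ! j then 1 else 0 :: 'b::comm_semiring_1)"
proof -
  have "length x = d" "length u = d" using assms by (auto simp: cart_V_def)
  then have "x = u \<longleftrightarrow> (\<forall>j<d. x ! j = u ! j)" by (simp add: list_eq_iff_nth_eq)
  then show ?thesis by (auto intro!: prod_zero)
qed

lemma lap_expansion_even_cart:
  assumes sg: "\<forall>j<d. simple_graph (Vs j) (Es j)"
    and even: "\<forall>j<d. \<forall>mu. lap_eigenvalue (Vs j) (Es j) mu \<longrightarrow> (\<exists>m::int. mu = 2 * of_int m)"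
    and u: "u \<in> cart_V d Vs"
  shows "\<exists>(I :: (nat \<Rightarrow> nat) set) F (M :: (nat \<Rightarrow> nat) \<Rightarrow> int).
           lap_expansion (cart_V d Vs) (cart_E d Vs Es) (\<lambda>x. if x = u then 1 else 0) I F (\<lambda>i. 2 * of_int (M i))"
proof -
  have "\<forall>j\<in>{..<d}. \<exists>(n::nat) F (M::nat \<Rightarrow> int).
          lap_expansion (Vs j) (Es j) (\<lambda>y. if y = u ! j then 1 else 0) {..<n} F (\<lambda>i. 2 * of_int (M i))"
    using sg even by (simp add: lap_expansion_even)
  from bchoice[OF this] obtain n where "\<forall>j\<in>{..<d}. \<exists>F (M::nat \<Rightarrow> int).
      lap_expansion (Vs j) (Es j) (\<lambda>y. if y = u ! j then 1 else 0) {..<n j} F (\<lambda>i. 2 * of_int (M i))"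
    by blast
  from bchoice[OF this] obtain F where "\<forall>j\<in>{..<d}. \<exists>M::nat \<Rightarrow> int.
      lap_expansion (Vs j) (Es j) (\<lambda>y. if y = u ! j then 1 else 0) {..<n j} (F j) (\<lambda>i. 2 * of_int (M i))"
    by blast
  from bchoice[OF this] obtain M where nFM: "\<forall>j\<in>{..<d}.
      lap_expansion (Vs j) (Es j) (\<lambda>y. if y = u ! j then 1 else 0) {..<n j} (F j) (\<lambda>i. 2 * of_int (M j i))"
    by blast
  define P where "P = PiE {..<d} (\<lambda>j. {..<n j})"
  define Psi where "Psi \<rho> x = (\<Prod>j<d. F j (\<rho> j) (x ! j))" for \<rho> x
  define Lam where "Lam \<rho> = (\<Sum>j<d. M j (\<rho> j))" for \<rho>
  have "lap_eigvec (cart_V d Vs) (cart_E d Vs Es) (Psi \<rho>) (2 * of_int (Lam \<rho>))" if "\<rho> \<in> P" for \<rho>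
  proof -
    have "\<forall>j<d. lap_eigvec (Vs j) (Es j) (F j (\<rho> j)) (2 * of_int (M j (\<rho> j)))"
      using nFM that by (auto simp: P_def lap_expansion_def)
    from lap_eigvec_cart[OF sg this] show ?thesis
      by (simp add: Psi_def[abs_def] Lam_def sum_distrib_left)
  qed
  moreover have "(if x = u then 1 else 0) = (\<Sum>\<rho>\<in>P. Psi \<rho> x)" if x: "x \<in> cart_V d Vs" for x
  proof -
    have "(if x = u then 1 else 0) = (\<Prod>j<d. if x ! j = u ! j then 1 else 0 :: complex)"
      by (rule indicator_cart[OF x u])
    also have "\<dots> = (\<Prod>j<d. \<Sum>i<n j. F j i (x ! j))"
      using nFM x by (intro prod.cong refl) (auto simp: lap_expansion_def cart_V_def)
    also have "\<dots> = (\<Sum>\<rho>\<in>P. Psi \<rho> x)"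
      unfolding P_def Psi_def by (rule prod_sum_PiE) auto
    finally show ?thesis .
  qed
  moreover have "finite P" unfolding P_def by (intro finite_PiE) auto
  ultimately have "lap_expansion (cart_V d Vs) (cart_E d Vs Es) (\<lambda>x. if x = u then 1 else 0) P Psi
      (\<lambda>\<rho>. 2 * of_int (Lam \<rho>))"
    by (simp add: lap_expansion_def)
  then show ?thesis by blast
qed

section \<open>Blow-ups\<close>

lemma nbrs_blowup: "nbrs (blowup_V V) (blowup_E E) p = UNIV \<times> nbrs V E (snd p)"
  by (auto simp: nbrs_def blowup_V_def blowup_E_def)

lemma sum_UNIV_bool_times: "(\<Sum>q\<in>UNIV \<times> A. f q) = (\<Sum>y\<in>A. f (False, y) + f (True, y))"
proof -
  have "(\<Sum>q\<in>UNIV \<times> A. f q) = (\<Sum>c\<in>UNIV. \<Sum>y\<in>A. f (c, y))"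
    by (simp add: sum.cartesian_product)
  then show ?thesis by (simp add: UNIV_bool sum.distrib)
qed

lemma laplacian_blowup:
  "laplacian (blowup_V V) (blowup_E E) f (b, x)
     = of_nat (2 * card (nbrs V E x)) * f (b, x)
       - (\<Sum>y\<in>nbrs V E x. f (False, y) + f (True, y))"
  by (simp add: laplacian_def nbrs_blowup card_cartesian_product sum_UNIV_bool_times)

lemma lap_eigvec_blowup_lift:
  assumes "lap_eigvec V E g mu"
  shows "lap_eigvec (blowup_V V) (blowup_E E) (\<lambda>p. g (snd p)) (2 * mu)"
  unfolding lap_eigvec_def
proof (clarify)
  fix b x assume "(b, x) \<in> blowup_V V"
  then have "laplacian V E g x = mu * g x" using assms by (auto simp: lap_eigvec_def blowup_V_def)
  moreover have "laplacian (blowup_V V) (blowup_E E) (\<lambda>p. g (snd p)) (b, x) = 2 * laplacian V E g x"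
    unfolding laplacian_blowup by (simp add: laplacian_def sum_distrib_left algebra_simps)
  ultimately show "laplacian (blowup_V V) (blowup_E E) (\<lambda>p. g (snd p)) (b, x) = 2 * mu * g (snd (b, x))"
    by simp
qed

lemma lap_eigvec_blowup_antisymmetric:
  assumes "u \<in> V"
  shows "lap_eigvec (blowup_V V) (blowup_E E)
           (\<lambda>p. (if p = (False, u) then 1 else 0) - (if p = (True, u) then 1 else 0))
           (of_nat (2 * card (nbrs V E u)))"
  unfolding lap_eigvec_def by (auto simp: laplacian_blowup)

lemma lap_expansion_blowup:
  assumes u: "u \<in> V" and exp: "lap_expansion V E (\<lambda>x. if x = u then 1 else 0) I F mu"
  shows "lap_expansion (blowup_V V) (blowup_E E) (\<lambda>p. if p = (False, u) then 1 else 0)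
           (insert None (Some ` I))
           (case_option (\<lambda>p. 1/2 * ((if p = (False, u) then 1 else 0) - (if p = (True, u) then 1 else 0)))
              (\<lambda>i p. 1/2 * F i (snd p)))
           (case_option (of_nat (2 * card (nbrs V E u))) (\<lambda>i. 2 * mu i))"
    (is "lap_expansion _ _ _ ?J ?F ?mu")
proof -
  have fin: "finite I" and eig: "\<forall>i\<in>I. lap_eigvec V E (F i) (mu i)"
    and indicator_u: "\<forall>x\<in>V. (if x = u then 1 else 0) = (\<Sum>i\<in>I. F i x)"
    using exp by (auto simp: lap_expansion_def)
  have "lap_eigvec (blowup_V V) (blowup_E E) (?F i) (?mu i)" if "i \<in> ?J" for i
  proof -
    from that consider "i = None" | j where "j \<in> I" "i = Some j" by blast
    then show ?thesis
    proof cases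
      case 1
      from lap_eigvec_cmult[OF lap_eigvec_blowup_antisymmetric[OF u], where a = "1/2"]
      show ?thesis unfolding 1 option.case .
    next
      case 2
      from lap_eigvec_cmult[OF lap_eigvec_blowup_lift[where g = "F j"], where a = "1/2"] eig 2(1)
      show ?thesis unfolding 2(2) option.case by blast
    qed
  qed
  moreover have "(if p = (False, u) then 1 else 0) = (\<Sum>i\<in>?J. ?F i p)" if "p \<in> blowup_V V" for p
  proof -
    from that obtain b x where p: "p = (b, x)" "x \<in> V" by (auto simp: blowup_V_def)
    have "(\<Sum>i\<in>?J. ?F i p)
        = 1/2 * ((if p = (False, u) then 1 else 0) - (if p = (True, u) then 1 else 0))
          + 1/2 * (\<Sum>i\<in>I. F i x)"
      using fin by (simp add: p sum.reindex sum_distrib_left)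
    then show ?thesis using indicator_u p by auto
  qed
  moreover have "finite ?J" using fin by simp
  ultimately show ?thesis unfolding lap_expansion_def by blast
qed

lemma lap_pst_blowup:
  assumes u: "u \<in> V" and odd_deg: "odd (card (nbrs V E u))"
    and exp: "lap_expansion V E (\<lambda>x. if x = u then 1 else 0) I F (\<lambda>i. 2 * of_int (M i))"
  shows "lap_pst (blowup_V V) (blowup_E E) (False, u) (True, u) (pi / 2)"
proof -
  have fin: "finite I" and indicator_u: "\<forall>x\<in>V. (if x = u then 1 else 0) = (\<Sum>i\<in>I. F i x)"
    using exp by (auto simp: lap_expansion_def)
  have odd_phase: "exp (\<i> * complex_of_real (pi / 2) * of_nat (2 * card (nbrs V E u))) = -1"
  proof -
    have "\<i> * complex_of_real (pi / 2) * of_nat (2 * card (nbrs V E u))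
        = \<i> * complex_of_real (real (card (nbrs V E u)) * pi)"
      by simp
    then have "exp (\<i> * complex_of_real (pi / 2) * of_nat (2 * card (nbrs V E u))) = cis pi ^ card (nbrs V E u)"
      by (simp only: cis_conv_exp[symmetric] DeMoivre)
    then show ?thesis using odd_deg by simp
  qed
  have even_phase: "exp (\<i> * complex_of_real (pi / 2) * (2 * (2 * of_int (M i)))) = 1" for i
  proof -
    have "exp (\<i> * complex_of_real (pi / 2) * (2 * (2 * of_int (M i)))) = cis (2 * pi * real_of_int (M i))"
      by (simp add: cis_conv_exp algebra_simps)
    then show ?thesis by (simp add: cis_multiple_2pi)
  qed
  have "transition (blowup_V V) (blowup_E E) (pi / 2) (False, u) (b, x)
      = (if (b, x) = (True, u) then 1 else 0)" if x: "x \<in> V" for b x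
  proof -
    have "(b, x) \<in> blowup_V V" using x by (simp add: blowup_V_def)
    from transition_lap_expansion[OF lap_expansion_blowup[OF u exp] this, of "pi / 2"]
    have "transition (blowup_V V) (blowup_E E) (pi / 2) (False, u) (b, x)
        = - (1/2 * ((if (b, x) = (False, u) then 1 else 0) - (if (b, x) = (True, u) then 1 else 0)))
          + 1/2 * (\<Sum>i\<in>I. F i x)"
      using fin odd_phase even_phase by (simp add: sum.reindex sum_distrib_left)
    then show ?thesis using indicator_u x by auto
  qed
  then show ?thesis
    unfolding lap_pst_def by (intro exI[of _ 1]) (auto simp: blowup_V_def)
qed

theorem theorem5:
  fixes d :: nat and Vs :: "nat \<Rightarrow> 'a set" and Es :: "nat \<Rightarrow> 'a \<Rightarrow> 'a \<Rightarrow> bool"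
    and ks :: "nat \<Rightarrow> nat" and u :: "'a list"
  assumes graphs: "\<forall>j<d. simple_graph (Vs j) (Es j) \<and> connected_graph (Vs j) (Es j)
                          \<and> regular_graph (Vs j) (Es j) (ks j)"
    and k_odd: "odd (\<Sum>j<d. ks j)"
    and even_eigs: "\<forall>j<d. \<forall>mu. lap_eigenvalue (Vs j) (Es j) mu \<longrightarrow> (\<exists>m::int. mu = 2 * of_int m)"
    and u: "u \<in> cart_V d Vs"
  shows "lap_pst (blowup_V (cart_V d Vs)) (blowup_E (cart_E d Vs Es)) (False, u) (True, u) (pi / 2)"
proof -
  have sg: "\<forall>j<d. simple_graph (Vs j) (Es j)" using graphs by blast
  obtain I :: "(nat \<Rightarrow> nat) set" and F M where exp:
    "lap_expansion (cart_V d Vs) (cart_E d Vs Es) (\<lambda>x. if x = u then 1 else 0) I F (\<lambda>i. 2 * of_int (M i))"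
    using lap_expansion_even_cart[OF sg even_eigs u] by blast
  have "card (nbrs (cart_V d Vs) (cart_E d Vs Es) u) = (\<Sum>j<d. ks j)"
    using card_nbrs_cart[OF sg u] graphs u by (simp add: regular_graph_def cart_V_def)
  then show ?thesis
    using k_odd by (intro lap_pst_blowup[OF u _ exp]) simp
qed

end
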